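(* Let $M>1$ and let $Q$ be an indefinite ternary quadratic form of Diophantine type $M$ with $\det Q=1$. Then there exists $0<\eta<1$ such that for every $R>10$ the set $\{v\in\Delta_Q\cap\mathcal{H}_{\eta,M}: R\le\|v\|<R^2\}$ is contained in the union of at most six planes through the origin.
   Context: $\|\cdot\|$ is the supremum norm on $\mathbb{R}^3$; for quadratic forms $\|Q\|$ is the maximal absolute value of coefficients. $Q_0(v)=v_2^2-2v_1v_3$. Fix $g\in\mathrm{SL}_3(\mathbb{R})$ with $Q(v)=Q_0(gv)$ for all $v$ and set $\Delta_Q=g\mathbb{Z}^3$. $Q$ is of Diophantine type $M$ if there is $c>0$ with $\|Q-\rho Q'\|>c\|Q'\|^{-M}$ for every nonzero integral ternary quadratic form $Q'$, $\rho=(\det Q')^{-1/3}$. $\mathcal{H}_{\eta,M}=\{v\in\mathbb{R}^3:|Q_0(v)|<\eta\|v\|^{-50M}\}$. *)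

theory Defs
  imports "HOL-Analysis.Analysis"
begin

text \<open>The coefficients of Q are the diagonal entries A_ii
  (coefficient of v_i^2) and 2 A_ij for i < j (coefficient of v_i v_j).\<close>

definition qf :: "real^3^3 \<Rightarrow> real^3 \<Rightarrow> real" where
  "qf A v = v \<bullet> (A *v v)"

definition qcoef :: "real^3^3 \<Rightarrow> 3 \<Rightarrow> 3 \<Rightarrow> real" where
  "qcoef A i j = (if i = j then A$i$i else 2 * A$i$j)"

definition qnorm :: "real^3^3 \<Rightarrow> real" where
  "qnorm A = Max {\<bar>qcoef A i j\<bar> | i j. True}"

definition symmetric_form :: "real^3^3 \<Rightarrow> bool" where
  "symmetric_form A \<longleftrightarrow> transpose A = A"

definition integral_form :: "real^3^3 \<Rightarrow> bool" where
  "integral_form A \<longleftrightarrow> symmetric_form A \<and> (\<forall>i j. qcoef A i j \<in> \<int>)"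

text \<open>Determinant convention: normalised so that the model form Q0 has determinant 1
  (the Gram determinant of Q0 is -1), matching the paper's hypothesis det Q = 1
  for Q = Q0 o g, g in SL_3.\<close>
definition qdet :: "real^3^3 \<Rightarrow> real" where
  "qdet A = - det A"

definition Q0 :: "real^3 \<Rightarrow> real" where
  "Q0 v = (v$2)^2 - 2 * (v$1) * (v$3)"

definition diophantine_type :: "real^3^3 \<Rightarrow> real \<Rightarrow> bool" where
  "diophantine_type A M \<longleftrightarrow> (\<exists>c>0. \<forall>A'. integral_form A' \<and> A' \<noteq> 0 \<longrightarrow>
     qnorm (A - inverse (root 3 (qdet A')) *\<^sub>R A') > c * qnorm A' powr (- M))"

definition Hset :: "real \<Rightarrow> real \<Rightarrow> (real^3) set" where
  "Hset \<eta> M = {v. \<bar>Q0 v\<bar> < \<eta> * infnorm v powr (- 50 * M)}"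

definition lattice_of :: "real^3^3 \<Rightarrow> (real^3) set" where
  "lattice_of g = {g *v (\<chi> i. of_int (z$i)) | z :: int^3. True}"

definition plane :: "real^3 \<Rightarrow> (real^3) set" where
  "plane n = {v. n \<bullet> v = 0}"

end

theory Submission
  imports Defs "HOL-Analysis.Cross3"
begin

text \<open>Pulled back by \<open>g\<inverse>\<close>, the lattice points in question become integer vectors \<open>z\<close> with
  \<open>|z| = O(R\<^sup>2)\<close> and \<open>|Q(z)| \<le> \<eta> R\<^sup>-\<^sup>5\<^sup>0\<^sup>M\<close>. If five of them were in general position (no three
  in a plane through 0), then up to a Lagrange interpolation term of size \<open>O(\<eta> R\<^sup>8\<^sup>-\<^sup>5\<^sup>0\<^sup>M)\<close>
  the form \<open>Q\<close> would be a multiple of the conic through them, an integral form of height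
  \<open>O(R\<^sup>2\<^sup>0)\<close>. After normalising its determinant, this contradicts the Diophantine lower
  bound, of order \<open>R\<^sup>-\<^sup>2\<^sup>0\<^sup>M\<close>, once \<open>\<eta>\<close> is small. Nonzero vectors with no five in general
  position lie in six planes through 0, and these pull back to planes.\<close>

unbundle cross3_syntax

definition triple_prod :: "real^3 \<Rightarrow> real^3 \<Rightarrow> real^3 \<Rightarrow> real" where
  "triple_prod a b c = (a \<times> b) \<bullet> c"

lemma triple_prod_expand:
  "triple_prod a b c = a$1*b$2*c$3 - a$1*b$3*c$2 - a$2*b$1*c$3 + a$2*b$3*c$1 + a$3*b$1*c$2 - a$3*b$2*c$1"
  unfolding triple_prod_def by (simp add: cross3_simps)

lemma triple_prod_cyclic: "triple_prod a b c = triple_prod b c a"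
  unfolding triple_prod_expand by algebra

lemma triple_prod_swap_right: "triple_prod a c b = - triple_prod a b c"
  unfolding triple_prod_expand by algebra

lemma triple_prod_repeat [simp]: "triple_prod a b a = 0" "triple_prod a b b = 0"
  unfolding triple_prod_def by (simp_all add: dot_cross_self)

lemma triple_prod_add_right: "triple_prod a b (c + d) = triple_prod a b c + triple_prod a b d"
  unfolding triple_prod_def by (simp add: inner_add_right)

lemma triple_prod_cramer:
  "triple_prod p1 p2 p3 *\<^sub>R y = triple_prod y p2 p3 *\<^sub>R p1 + triple_prod p1 y p3 *\<^sub>R p2 + triple_prod p1 p2 y *\<^sub>R p3"
  unfolding vec_eq_iff forall_3 triple_prod_expand by (simp add: algebra_simps)

lemma triple_prod_pluecker:
  "triple_prod p4 p2 p3 * triple_prod p1 p5 p3 - triple_prod p1 p4 p3 * triple_prod p5 p2 p3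
     = triple_prod p1 p2 p3 * triple_prod p4 p5 p3"
  unfolding triple_prod_expand by algebra

lemma norm_cross3_le: "norm (a \<times> b) \<le> norm a * norm b"
proof (rule power2_le_imp_le)
  show "(norm (a \<times> b))\<^sup>2 \<le> (norm a * norm b)\<^sup>2"
    using norm_cross_dot[of a b] zero_le_power2[of "a \<bullet> b"] by linarith
qed simp

lemma abs_triple_prod_le: "\<bar>triple_prod a b c\<bar> \<le> norm a * norm b * norm c"
proof -
  have "\<bar>triple_prod a b c\<bar> \<le> norm (a \<times> b) * norm c"
    unfolding triple_prod_def by (rule Cauchy_Schwarz_ineq2)
  also have "\<dots> \<le> norm a * norm b * norm c"
    by (simp add: mult_right_mono norm_cross3_le)
  finally show ?thesis .
qed

definition int_vec :: "real^3 \<Rightarrow> bool" where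
  "int_vec p \<longleftrightarrow> (\<forall>i. p$i \<in> \<int>)"

lemma int_vec_cross3: "int_vec a \<Longrightarrow> int_vec b \<Longrightarrow> int_vec (a \<times> b)"
  unfolding int_vec_def forall_3 by (simp add: cross3_simps)

lemma triple_prod_Ints: "int_vec a \<Longrightarrow> int_vec b \<Longrightarrow> int_vec c \<Longrightarrow> triple_prod a b c \<in> \<int>"
  unfolding int_vec_def forall_3 triple_prod_expand by simp

definition bform :: "real^3^3 \<Rightarrow> real^3 \<Rightarrow> real^3 \<Rightarrow> real" where
  "bform X y z = y \<bullet> (X *v z)"

lemma qf_eq_bform: "qf X y = bform X y y"
  unfolding qf_def bform_def ..

lemma bform_add_left: "bform X (a + b) c = bform X a c + bform X b c"
  unfolding bform_def by (simp add: inner_add_left)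

lemma bform_add_right: "bform X c (a + b) = bform X c a + bform X c b"
  unfolding bform_def by (simp add: inner_add_right matrix_vector_right_distrib)

lemma bform_scaleR_left: "bform X (r *\<^sub>R a) c = r * bform X a c"
  unfolding bform_def by simp

lemma bform_scaleR_right: "bform X c (r *\<^sub>R a) = r * bform X c a"
  unfolding bform_def by (simp add: matrix_vector_mult_scaleR)

lemma bform_expand:
  "bform X y z = y$1*X$1$1*z$1 + y$1*X$1$2*z$2 + y$1*X$1$3*z$3 + y$2*X$2$1*z$1 + y$2*X$2$2*z$2
     + y$2*X$2$3*z$3 + y$3*X$3$1*z$1 + y$3*X$3$2*z$2 + y$3*X$3$3*z$3"
  unfolding bform_def inner_vec_def matrix_vector_mult_def sum_3 by (simp add: algebra_simps)

lemma bform_axis: "bform X (axis i 1) (axis j 1) = X$i$j"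
  by (simp add: bform_def inner_axis' matrix_vector_mult_basis column_def)

lemma symmetric_formD: "symmetric_form X \<Longrightarrow> X$j$i = X$i$j"
  unfolding symmetric_form_def by (drule arg_cong[where f = "\<lambda>Y. Y$i$j"]) (simp add: transpose_def)

lemma bform_commute: "symmetric_form X \<Longrightarrow> bform X y z = bform X z y"
  unfolding bform_expand using symmetric_formD[of X] by (simp add: algebra_simps)

lemma qf_scaleR_vec: "qf X (a *\<^sub>R p) = a * a * qf X p"
  unfolding qf_eq_bform bform_scaleR_left bform_scaleR_right by simp

lemma qf_add_vec: "symmetric_form X \<Longrightarrow> qf X (p + q) = qf X p + qf X q + 2 * bform X p q"
  unfolding qf_eq_bform bform_add_left bform_add_right by (simp add: bform_commute[of X q p])

lemma qf_lincomb3: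
  assumes "symmetric_form X"
  shows "qf X (a *\<^sub>R p + b *\<^sub>R q + c *\<^sub>R r) = a*a*qf X p + b*b*qf X q + c*c*qf X r
     + 2*a*b*bform X p q + 2*a*c*bform X p r + 2*b*c*bform X q r"
  unfolding qf_add_vec[OF assms] qf_scaleR_vec bform_add_left bform_scaleR_left bform_scaleR_right
  by (simp add: algebra_simps)

lemma symmetric_form_eq_0_if_qf_eq_0:
  assumes "symmetric_form X" and "\<And>y. qf X y = 0"
  shows "X = 0"
proof -
  have diag: "X$i$i = 0" for i
    using assms(2)[of "axis i 1"] by (simp add: qf_eq_bform bform_axis)
  have "X$i$j = 0" for i j
    using assms(2)[of "axis i 1 + axis j 1"] unfolding qf_add_vec[OF assms(1)]
    by (simp add: qf_eq_bform bform_axis diag)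
  then show ?thesis by (simp add: vec_eq_iff)
qed

lemma qf_add_form: "qf (X + Y) y = qf X y + qf Y y"
  unfolding qf_def by (simp add: matrix_vector_mult_add_rdistrib inner_add_right)

lemma qf_diff_form: "qf (X - Y) y = qf X y - qf Y y"
  unfolding qf_def by (simp add: matrix_vector_mult_diff_rdistrib inner_diff_right)

lemma qf_scaleR_form: "qf (c *\<^sub>R X) y = c * qf X y"
  unfolding qf_def by (simp add: scaleR_matrix_vector_assoc[symmetric])

lemma symmetric_form_add: "symmetric_form X \<Longrightarrow> symmetric_form Y \<Longrightarrow> symmetric_form (X + Y)"
  and symmetric_form_diff: "symmetric_form X \<Longrightarrow> symmetric_form Y \<Longrightarrow> symmetric_form (X - Y)"
  and symmetric_form_scaleR: "symmetric_form X \<Longrightarrow> symmetric_form (c *\<^sub>R X)"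
  unfolding symmetric_form_def by (auto simp: transpose_def vec_eq_iff)

lemma qcoef_add [simp]: "qcoef (X + Y) i j = qcoef X i j + qcoef Y i j"
  and qcoef_diff [simp]: "qcoef (X - Y) i j = qcoef X i j - qcoef Y i j"
  and qcoef_scaleR [simp]: "qcoef (c *\<^sub>R X) i j = c * qcoef X i j"
  and qcoef_zero [simp]: "qcoef 0 i j = 0"
  unfolding qcoef_def by simp_all

lemma finite_qcoef_values: "finite {\<bar>qcoef X i j\<bar> | i j. True}"
proof -
  have "{\<bar>qcoef X i j\<bar> | i j. True} = (\<lambda>(i, j). \<bar>qcoef X i j\<bar>) ` UNIV" by auto
  then show ?thesis by simp
qed

lemma abs_qcoef_le_qnorm: "\<bar>qcoef X i j\<bar> \<le> qnorm X"
  unfolding qnorm_def by (rule Max_ge[OF finite_qcoef_values]) auto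

lemma qnorm_leI: "(\<And>i j. \<bar>qcoef X i j\<bar> \<le> b) \<Longrightarrow> qnorm X \<le> b"
  unfolding qnorm_def by (subst Max_le_iff[OF finite_qcoef_values]) auto

lemma qnorm_nonneg: "0 \<le> qnorm X"
  using abs_qcoef_le_qnorm[of X 1 1] by simp

lemma qnorm_zero [simp]: "qnorm 0 = 0"
  using qnorm_leI[of 0 0] qnorm_nonneg[of 0] by simp

lemma qnorm_triangle: "qnorm (X + Y) \<le> qnorm X + qnorm Y"
  by (rule qnorm_leI) (metis qcoef_add abs_triangle_ineq add_mono abs_qcoef_le_qnorm order_trans)

lemma qnorm_scaleR_le: "qnorm (c *\<^sub>R X) \<le> \<bar>c\<bar> * qnorm X"
  by (rule qnorm_leI) (simp add: abs_mult mult_left_mono abs_qcoef_le_qnorm)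

lemma qnorm_diff_le: "qnorm (X - Y) \<le> qnorm X + qnorm Y"
  using qnorm_triangle[of X "(-1) *\<^sub>R Y"] qnorm_scaleR_le[of "-1" Y] by simp

lemma qnorm_sum_list_le: "qnorm (sum_list Xs) \<le> sum_list (map qnorm Xs)"
  by (induction Xs) (auto intro: order_trans[OF qnorm_triangle])

lemma abs_entry_le_qnorm: "\<bar>X$i$j\<bar> \<le> qnorm X"
  using abs_qcoef_le_qnorm[of X i j] by (cases "i = j") (auto simp: qcoef_def)

lemma qnorm_pos: "X \<noteq> 0 \<Longrightarrow> 0 < qnorm X"
  by (metis abs_entry_le_qnorm abs_le_zero_iff antisym_conv2 qnorm_nonneg vec_eq_iff zero_index)

lemma integral_form_diff: "integral_form X \<Longrightarrow> integral_form Y \<Longrightarrow> integral_form (X - Y)"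
  and integral_form_scaleR: "integral_form X \<Longrightarrow> c \<in> \<int> \<Longrightarrow> integral_form (c *\<^sub>R X)"
  unfolding integral_form_def by (auto intro: symmetric_form_add symmetric_form_diff symmetric_form_scaleR)

lemma qf_zero_form [simp]: "qf 0 y = 0"
  unfolding qf_def by simp

lemma qf_sum_list: "qf (sum_list Xs) y = (\<Sum>X\<leftarrow>Xs. qf X y)"
  by (induction Xs) (simp_all add: qf_add_form)

definition prod_form :: "real^3 \<Rightarrow> real^3 \<Rightarrow> real^3^3" where
  "prod_form a b = (\<chi> i j. (a$i * b$j + b$i * a$j) / 2)"

lemma symmetric_form_prod_form: "symmetric_form (prod_form a b)"
  unfolding symmetric_form_def prod_form_def transpose_def vec_eq_iff by (simp add: algebra_simps)

lemma qf_prod_form: "qf (prod_form a b) y = (a \<bullet> y) * (b \<bullet> y)"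
  unfolding qf_def prod_form_def inner_vec_def matrix_vector_mult_def sum_3 by (simp add: algebra_simps)

lemma qf_prod_form_cross3:
  "qf (prod_form (a \<times> b) (c \<times> d)) y = triple_prod a b y * triple_prod c d y"
  unfolding qf_prod_form triple_prod_def ..

lemma integral_form_prod_form:
  assumes "int_vec a" "int_vec b"
  shows "integral_form (prod_form a b)"
proof -
  have "qcoef (prod_form a b) i j = (if i = j then a$i*b$i else a$i*b$j + b$i*a$j)" for i j
    unfolding qcoef_def prod_form_def by simp
  then show ?thesis
    using assms symmetric_form_prod_form unfolding integral_form_def int_vec_def by auto
qed

lemma qnorm_prod_form_le: "qnorm (prod_form a b) \<le> 2 * norm a * norm b"
proof (rule qnorm_leI)
  fix i j
  have "\<bar>qcoef (prod_form a b) i j\<bar> \<le> \<bar>a$i * b$j\<bar> + \<bar>b$i * a$j\<bar>"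
    unfolding qcoef_def prod_form_def by (auto simp: abs_mult intro: abs_triangle_ineq order_trans)
  also have "\<dots> \<le> norm a * norm b + norm b * norm a"
    by (intro add_mono) (simp_all add: abs_mult mult_mono component_le_norm_cart)
  finally show "\<bar>qcoef (prod_form a b) i j\<bar> \<le> 2 * norm a * norm b" by simp
qed

lemma qnorm_prod_form_cross3_le:
  assumes "norm a \<le> N" "norm b \<le> N" "norm c \<le> N" "norm d \<le> N"
  shows "qnorm (prod_form (a \<times> b) (c \<times> d)) \<le> 2 * N^4"
proof -
  have N: "0 \<le> N" using assms(1) norm_ge_zero order_trans by blast
  have "norm (a \<times> b) \<le> N * N" "norm (c \<times> d) \<le> N * N"
    using assms N norm_cross3_le[of a b] norm_cross3_le[of c d] mult_mono[of _ N _ N]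
    by (meson norm_ge_zero order_trans)+
  then have "2 * norm (a \<times> b) * norm (c \<times> d) \<le> 2 * (N * N) * (N * N)"
    by (simp add: mult_mono)
  then show ?thesis
    using qnorm_prod_form_le[of "a \<times> b" "c \<times> d"] by (simp add: power4_eq_xxxx mult.assoc)
qed

definition general_position5 :: "real^3 \<Rightarrow> real^3 \<Rightarrow> real^3 \<Rightarrow> real^3 \<Rightarrow> real^3 \<Rightarrow> bool" where
  "general_position5 p1 p2 p3 p4 p5 \<longleftrightarrow>
     triple_prod p1 p2 p3 \<noteq> 0 \<and> triple_prod p1 p2 p4 \<noteq> 0 \<and> triple_prod p1 p2 p5 \<noteq> 0 \<and>
     triple_prod p1 p3 p4 \<noteq> 0 \<and> triple_prod p1 p3 p5 \<noteq> 0 \<and> triple_prod p1 p4 p5 \<noteq> 0 \<and>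
     triple_prod p2 p3 p4 \<noteq> 0 \<and> triple_prod p2 p3 p5 \<noteq> 0 \<and> triple_prod p2 p4 p5 \<noteq> 0 \<and>
     triple_prod p3 p4 p5 \<noteq> 0"

text \<open>Cramer's rule expresses \<open>p4\<close> and \<open>p5\<close> in the basis \<open>p1, p2, p3\<close>; vanishing at \<open>p4\<close>
  and \<open>p5\<close> then gives two linear equations for \<open>bform X p1 p3\<close> and \<open>bform X p2 p3\<close>, whose
  determinant is nonzero by the Pluecker relation.\<close>
lemma symmetric_form_eq_0_if_vanishes_at_five_points:
  assumes sym: "symmetric_form X" and gp: "general_position5 p1 p2 p3 p4 p5"
    and zero: "qf X p1 = 0" "qf X p2 = 0" "qf X p3 = 0" "qf X p4 = 0" "qf X p5 = 0"
      "qf X (p1 + p2) = 0"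
  shows "X = 0"
proof -
  define D where "D = triple_prod p1 p2 p3"
  have D: "D \<noteq> 0" using gp unfolding D_def general_position5_def by blast
  have b12: "bform X p1 p2 = 0"
    using zero(1,2,6) unfolding qf_add_vec[OF sym] by simp
  define w1 w2 w3 where "w1 = triple_prod p4 p2 p3" "w2 = triple_prod p1 p4 p3" "w3 = triple_prod p1 p2 p4"
  define u1 u2 u3 where "u1 = triple_prod p5 p2 p3" "u2 = triple_prod p1 p5 p3" "u3 = triple_prod p1 p2 p5"
  have w3: "w3 \<noteq> 0" "u3 \<noteq> 0"
    using gp unfolding w1_w2_w3_def u1_u2_u3_def general_position5_def by auto
  have "2 * w3 * (w1 * bform X p1 p3 + w2 * bform X p2 p3) = qf X (D *\<^sub>R p4)"
    unfolding D_def triple_prod_cramer[of p1 p2 p3 p4] qf_lincomb3[OF sym] w1_w2_w3_def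
    using zero b12 by (simp add: algebra_simps)
  then have e4: "w1 * bform X p1 p3 + w2 * bform X p2 p3 = 0"
    using w3 zero(4) by (simp add: qf_scaleR_vec)
  have "2 * u3 * (u1 * bform X p1 p3 + u2 * bform X p2 p3) = qf X (D *\<^sub>R p5)"
    unfolding D_def triple_prod_cramer[of p1 p2 p3 p5] qf_lincomb3[OF sym] u1_u2_u3_def
    using zero b12 by (simp add: algebra_simps)
  then have e5: "u1 * bform X p1 p3 + u2 * bform X p2 p3 = 0"
    using w3 zero(5) by (simp add: qf_scaleR_vec)
  have det: "w1 * u2 - w2 * u1 \<noteq> 0"
    using D gp triple_prod_cyclic[of p3 p4 p5] unfolding w1_w2_w3_def u1_u2_u3_def
      triple_prod_pluecker D_def general_position5_def by simp
  have "(w1 * u2 - w2 * u1) * bform X p1 p3 = 0" "(w1 * u2 - w2 * u1) * bform X p2 p3 = 0"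
    using e4 e5 by algebra+
  then have b3: "bform X p1 p3 = 0" "bform X p2 p3 = 0"
    using det by simp_all
  have "qf X y = 0" for y
  proof -
    have "D * D * qf X y = qf X (D *\<^sub>R y)" by (simp add: qf_scaleR_vec)
    also have "\<dots> = 0"
      unfolding D_def triple_prod_cramer[of p1 p2 p3 y] qf_lincomb3[OF sym] using zero b12 b3 by simp
    finally show ?thesis using D by simp
  qed
  then show ?thesis using symmetric_form_eq_0_if_qf_eq_0 sym by blast
qed

text \<open>The conics through \<open>p1, \<dots>, p4\<close> form the pencil spanned by the line pairs
  \<open>p1p3 \<union> p2p4\<close> and \<open>p1p2 \<union> p3p4\<close>; the coefficients pick the member through \<open>p5\<close>.\<close>
definition five_point_conic :: "real^3 \<Rightarrow> real^3 \<Rightarrow> real^3 \<Rightarrow> real^3 \<Rightarrow> real^3 \<Rightarrow> real^3^3" where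
  "five_point_conic p1 p2 p3 p4 p5 =
     (triple_prod p1 p2 p5 * triple_prod p3 p4 p5) *\<^sub>R prod_form (p1 \<times> p3) (p2 \<times> p4)
   - (triple_prod p1 p3 p5 * triple_prod p2 p4 p5) *\<^sub>R prod_form (p1 \<times> p2) (p3 \<times> p4)"

lemma qf_five_point_conic:
  "qf (five_point_conic p1 p2 p3 p4 p5) y =
     triple_prod p1 p2 p5 * triple_prod p3 p4 p5 * (triple_prod p1 p3 y * triple_prod p2 p4 y)
   - triple_prod p1 p3 p5 * triple_prod p2 p4 p5 * (triple_prod p1 p2 y * triple_prod p3 p4 y)"
  unfolding five_point_conic_def qf_diff_form qf_scaleR_form qf_prod_form_cross3 ..

lemma five_point_conic_vanishes:
  "qf (five_point_conic p1 p2 p3 p4 p5) p1 = 0" "qf (five_point_conic p1 p2 p3 p4 p5) p2 = 0"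
  "qf (five_point_conic p1 p2 p3 p4 p5) p3 = 0" "qf (five_point_conic p1 p2 p3 p4 p5) p4 = 0"
  "qf (five_point_conic p1 p2 p3 p4 p5) p5 = 0"
  unfolding qf_five_point_conic by simp_all

lemma five_point_conic_nonzero_at_sum:
  assumes "general_position5 p1 p2 p3 p4 p5"
  shows "qf (five_point_conic p1 p2 p3 p4 p5) (p1 + p2) \<noteq> 0"
proof -
  have "qf (five_point_conic p1 p2 p3 p4 p5) (p1 + p2) =
      - (triple_prod p1 p2 p5 * triple_prod p3 p4 p5 * triple_prod p1 p2 p3 * triple_prod p1 p2 p4)"
    unfolding qf_five_point_conic triple_prod_add_right
    using triple_prod_swap_right[of p1 p2 p3] triple_prod_cyclic[of p1 p2 p4] triple_prod_cyclic[of p2 p4 p1]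
    by simp
  then show ?thesis using assms unfolding general_position5_def by simp
qed

lemma symmetric_form_five_point_conic: "symmetric_form (five_point_conic p1 p2 p3 p4 p5)"
  unfolding five_point_conic_def
  by (intro symmetric_form_diff symmetric_form_scaleR symmetric_form_prod_form)

lemma integral_form_five_point_conic:
  assumes "\<And>p. p \<in> {p1, p2, p3, p4, p5} \<Longrightarrow> int_vec p"
  shows "integral_form (five_point_conic p1 p2 p3 p4 p5)"
  unfolding five_point_conic_def using assms
  by (intro integral_form_diff integral_form_scaleR integral_form_prod_form int_vec_cross3)
    (simp_all add: triple_prod_Ints)

lemma qnorm_five_point_conic_le:
  assumes norm: "\<And>p. p \<in> {p1, p2, p3, p4, p5} \<Longrightarrow> norm p \<le> N"
  shows "qnorm (five_point_conic p1 p2 p3 p4 p5) \<le> 4 * N^10"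
proof -
  let ?P = "{p1, p2, p3, p4, p5}"
  have N: "0 \<le> N" using norm[of p1] norm_ge_zero order_trans by blast
  have tp: "\<bar>triple_prod a b c\<bar> \<le> N^3" if "a \<in> ?P" "b \<in> ?P" "c \<in> ?P" for a b c
  proof -
    have "norm a * norm b * norm c \<le> N * N * N"
      using norm[OF that(1)] norm[OF that(2)] norm[OF that(3)] N by (intro mult_mono) auto
    then show ?thesis using abs_triple_prod_le[of a b c] by (simp add: power3_eq_cube)
  qed
  have coef: "\<bar>triple_prod a b c * triple_prod a' b' c'\<bar> \<le> N^3 * N^3"
    if "a \<in> ?P" "b \<in> ?P" "c \<in> ?P" "a' \<in> ?P" "b' \<in> ?P" "c' \<in> ?P" for a b c a' b' c'
    unfolding abs_mult using tp[OF that(1-3)] tp[OF that(4-6)] N by (intro mult_mono) auto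
  have form: "qnorm (prod_form (a \<times> b) (c \<times> d)) \<le> 2 * N^4"
    if "a \<in> ?P" "b \<in> ?P" "c \<in> ?P" "d \<in> ?P" for a b c d
    using norm that by (intro qnorm_prod_form_cross3_le) blast+
  let ?\<alpha> = "triple_prod p1 p2 p5 * triple_prod p3 p4 p5"
  let ?\<beta> = "triple_prod p1 p3 p5 * triple_prod p2 p4 p5"
  have "qnorm (five_point_conic p1 p2 p3 p4 p5)
      \<le> \<bar>?\<alpha>\<bar> * qnorm (prod_form (p1 \<times> p3) (p2 \<times> p4)) + \<bar>?\<beta>\<bar> * qnorm (prod_form (p1 \<times> p2) (p3 \<times> p4))"
    unfolding five_point_conic_def
    by (rule order_trans[OF qnorm_diff_le add_mono[OF qnorm_scaleR_le qnorm_scaleR_le]])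
  also have "\<dots> \<le> (N^3 * N^3) * (2 * N^4) + (N^3 * N^3) * (2 * N^4)"
    using coef form by (intro add_mono mult_mono) (simp_all add: qnorm_nonneg)
  also have "\<dots> = 4 * N^10" by (simp add: power_add[symmetric])
  finally show ?thesis .
qed

text \<open>\<open>prod_form (a \<times> b) (c \<times> d)\<close> is the line pair \<open>ab \<union> cd\<close>; this multiple of it agrees
  with \<open>A\<close> at \<open>x\<close>.\<close>
definition lagrange_term :: "real^3^3 \<Rightarrow> real^3 \<Rightarrow> real^3 \<Rightarrow> real^3 \<Rightarrow> real^3 \<Rightarrow> real^3 \<Rightarrow> real^3^3" where
  "lagrange_term A x a b c d =
     (qf A x / (triple_prod a b x * triple_prod c d x)) *\<^sub>R prod_form (a \<times> b) (c \<times> d)"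

lemma qf_lagrange_term:
  "qf (lagrange_term A x a b c d) y =
     qf A x / (triple_prod a b x * triple_prod c d x) * (triple_prod a b y * triple_prod c d y)"
  unfolding lagrange_term_def qf_scaleR_form qf_prod_form_cross3 ..

lemma symmetric_form_lagrange_term: "symmetric_form (lagrange_term A x a b c d)"
  unfolding lagrange_term_def by (intro symmetric_form_scaleR symmetric_form_prod_form)

lemma qnorm_lagrange_term_le:
  assumes "int_vec x" "int_vec a" "int_vec b" "int_vec c" "int_vec d"
    and "triple_prod a b x * triple_prod c d x \<noteq> 0"
    and "norm a \<le> N" "norm b \<le> N" "norm c \<le> N" "norm d \<le> N" and "\<bar>qf A x\<bar> \<le> e"
  shows "qnorm (lagrange_term A x a b c d) \<le> 2 * e * N^4"
proof -
  let ?h = "triple_prod a b x * triple_prod c d x"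
  have "?h \<in> \<int>" using assms(1-5) by (simp add: triple_prod_Ints)
  then have "1 \<le> \<bar>?h\<bar>" using assms(6) by (rule Ints_nonzero_abs_ge1)
  then have "\<bar>qf A x\<bar> / \<bar>?h\<bar> \<le> \<bar>qf A x\<bar>"
    by (simp add: divide_le_eq mult_le_cancel_left1)
  then have "\<bar>qf A x / ?h\<bar> \<le> e"
    using assms(11) by (simp add: abs_divide)
  moreover have "qnorm (prod_form (a \<times> b) (c \<times> d)) \<le> 2 * N^4"
    using assms(7-10) by (rule qnorm_prod_form_cross3_le)
  ultimately have "\<bar>qf A x / ?h\<bar> * qnorm (prod_form (a \<times> b) (c \<times> d)) \<le> e * (2 * N^4)"
    using assms(11) by (intro mult_mono) (auto simp: qnorm_nonneg)
  then show ?thesis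
    unfolding lagrange_term_def by (auto intro: order_trans[OF qnorm_scaleR_le])
qed

definition interpolation_form ::
    "real^3^3 \<Rightarrow> real^3 \<Rightarrow> real^3 \<Rightarrow> real^3 \<Rightarrow> real^3 \<Rightarrow> real^3 \<Rightarrow> real^3^3" where
  "interpolation_form A p1 p2 p3 p4 p5 = sum_list
     [lagrange_term A p1 p2 p3 p4 p5, lagrange_term A p2 p1 p3 p4 p5, lagrange_term A p3 p1 p2 p4 p5,
      lagrange_term A p4 p1 p2 p3 p5, lagrange_term A p5 p1 p2 p3 p4]"

lemma general_position5_lagrange_denominators:
  assumes "general_position5 p1 p2 p3 p4 p5"
  shows "triple_prod p2 p3 p1 * triple_prod p4 p5 p1 \<noteq> 0"
    "triple_prod p1 p3 p2 * triple_prod p4 p5 p2 \<noteq> 0"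
    "triple_prod p1 p2 p3 * triple_prod p4 p5 p3 \<noteq> 0"
    "triple_prod p1 p2 p4 * triple_prod p3 p5 p4 \<noteq> 0"
    "triple_prod p1 p2 p5 * triple_prod p3 p4 p5 \<noteq> 0"
  using assms triple_prod_cyclic[of p1 p2 p3] triple_prod_cyclic[of p1 p4 p5]
    triple_prod_swap_right[of p1 p2 p3] triple_prod_cyclic[of p2 p4 p5] triple_prod_cyclic[of p3 p4 p5]
    triple_prod_swap_right[of p3 p4 p5]
  unfolding general_position5_def by auto

lemma qf_interpolation_form:
  assumes "general_position5 p1 p2 p3 p4 p5"
  shows "qf (interpolation_form A p1 p2 p3 p4 p5) p1 = qf A p1"
    "qf (interpolation_form A p1 p2 p3 p4 p5) p2 = qf A p2"
    "qf (interpolation_form A p1 p2 p3 p4 p5) p3 = qf A p3"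
    "qf (interpolation_form A p1 p2 p3 p4 p5) p4 = qf A p4"
    "qf (interpolation_form A p1 p2 p3 p4 p5) p5 = qf A p5"
  using general_position5_lagrange_denominators[OF assms]
  unfolding interpolation_form_def qf_sum_list by (simp_all add: qf_lagrange_term)

lemma symmetric_form_interpolation_form: "symmetric_form (interpolation_form A p1 p2 p3 p4 p5)"
  unfolding interpolation_form_def by (simp add: symmetric_form_add symmetric_form_lagrange_term)

lemma qnorm_interpolation_form_le:
  assumes gp: "general_position5 p1 p2 p3 p4 p5"
    and pts: "\<And>p. p \<in> {p1, p2, p3, p4, p5} \<Longrightarrow> int_vec p \<and> norm p \<le> N \<and> \<bar>qf A p\<bar> \<le> e"
  shows "qnorm (interpolation_form A p1 p2 p3 p4 p5) \<le> 10 * e * N^4"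
proof -
  let ?Ts = "[lagrange_term A p1 p2 p3 p4 p5, lagrange_term A p2 p1 p3 p4 p5,
      lagrange_term A p3 p1 p2 p4 p5, lagrange_term A p4 p1 p2 p3 p5, lagrange_term A p5 p1 p2 p3 p4]"
  let ?P = "{p1, p2, p3, p4, p5}"
  have P: "int_vec p" "norm p \<le> N" "\<bar>qf A p\<bar> \<le> e" if "p \<in> ?P" for p
    using pts[OF that] by auto
  have bound: "qnorm (lagrange_term A x a b c d) \<le> 2 * e * N^4"
    if "x \<in> ?P" "a \<in> ?P" "b \<in> ?P" "c \<in> ?P" "d \<in> ?P"
      "triple_prod a b x * triple_prod c d x \<noteq> 0" for x a b c d
    using that(6) P[OF that(1)] P[OF that(2)] P[OF that(3)] P[OF that(4)] P[OF that(5)]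
    by (intro qnorm_lagrange_term_le)
  have "\<forall>T \<in> set ?Ts. qnorm T \<le> 2 * e * N^4"
    using general_position5_lagrange_denominators[OF gp] by (simp add: bound)
  then have "sum_list (map qnorm ?Ts) \<le> sum_list (map (\<lambda>_. 2 * e * N^4) ?Ts)"
    by (intro sum_list_mono) blast
  then show ?thesis
    using qnorm_sum_list_le[of ?Ts] unfolding interpolation_form_def by simp
qed

text \<open>Subtracting the interpolation form leaves a form vanishing at the five points, which by
  uniqueness of the conic through them is a multiple of the integral \<open>five_point_conic\<close>.\<close>
lemma integral_form_approximation:
  assumes sym: "symmetric_form A" and gp: "general_position5 p1 p2 p3 p4 p5"
    and pts: "\<And>p. p \<in> {p1, p2, p3, p4, p5} \<Longrightarrow> int_vec p \<and> norm p \<le> N \<and> \<bar>qf A p\<bar> \<le> e"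
  shows "\<exists>A' \<mu>. integral_form A' \<and> A' \<noteq> 0 \<and> qnorm A' \<le> 4 * N^10 \<and>
           qnorm (A - \<mu> *\<^sub>R A') \<le> 10 * e * N^4"
proof -
  define S where "S = interpolation_form A p1 p2 p3 p4 p5"
  define C where "C = five_point_conic p1 p2 p3 p4 p5"
  define \<mu> where "\<mu> = qf (A - S) (p1 + p2) / qf C (p1 + p2)"
  have C12: "qf C (p1 + p2) \<noteq> 0"
    unfolding C_def using gp by (rule five_point_conic_nonzero_at_sum)
  have "qf (A - S) p = 0" if "p \<in> {p1, p2, p3, p4, p5}" for p
    using that qf_interpolation_form[OF gp] unfolding S_def qf_diff_form by auto
  moreover have "qf C p = 0" if "p \<in> {p1, p2, p3, p4, p5}" for p
    using that five_point_conic_vanishes unfolding C_def by auto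
  ultimately have vanish: "qf (A - S - \<mu> *\<^sub>R C) p = 0" if "p \<in> {p1, p2, p3, p4, p5}" for p
    using that unfolding qf_diff_form[of "A - S"] qf_scaleR_form by simp
  have "qf (A - S - \<mu> *\<^sub>R C) (p1 + p2) = 0"
    unfolding qf_diff_form[of "A - S"] qf_scaleR_form \<mu>_def using C12 by simp
  moreover have "symmetric_form (A - S - \<mu> *\<^sub>R C)"
    unfolding S_def C_def
    by (intro symmetric_form_diff symmetric_form_scaleR sym symmetric_form_interpolation_form
        symmetric_form_five_point_conic)
  ultimately have "A - S - \<mu> *\<^sub>R C = 0"
    using symmetric_form_eq_0_if_vanishes_at_five_points[OF _ gp] vanish by blast
  then have "A - \<mu> *\<^sub>R C = S" by (simp add: algebra_simps)
  moreover have "C \<noteq> 0" using C12 by auto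
  ultimately show ?thesis
    using integral_form_five_point_conic[of p1 p2 p3 p4 p5] qnorm_five_point_conic_le[of p1 p2 p3 p4 p5 N]
      qnorm_interpolation_form_le[OF gp pts] pts unfolding S_def C_def
    by (intro exI[of _ C] exI[of _ \<mu>]) (simp add: C_def)
qed

lemma abs_prod3_diff_le:
  fixes x1 x2 x3 y1 y2 y3 m e :: real
  assumes "\<bar>x2\<bar> \<le> m" "\<bar>x3\<bar> \<le> m" "\<bar>y1\<bar> \<le> m" "\<bar>y2\<bar> \<le> m"
    and "\<bar>x1 - y1\<bar> \<le> e" "\<bar>x2 - y2\<bar> \<le> e" "\<bar>x3 - y3\<bar> \<le> e"
  shows "\<bar>x1*x2*x3 - y1*y2*y3\<bar> \<le> 3 * m^2 * e"
proof -
  have m: "0 \<le> m" and e: "0 \<le> e" using assms(1,5) by linarith+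
  have "x1*x2*x3 - y1*y2*y3 = (x1 - y1)*x2*x3 + y1*(x2 - y2)*x3 + y1*y2*(x3 - y3)"
    by (simp add: algebra_simps)
  also have "\<bar>\<dots>\<bar> \<le> \<bar>(x1 - y1)*x2*x3\<bar> + \<bar>y1*(x2 - y2)*x3\<bar> + \<bar>y1*y2*(x3 - y3)\<bar>"
    by (rule order_trans[OF abs_triangle_ineq add_right_mono[OF abs_triangle_ineq]])
  also have "\<dots> \<le> e*m*m + m*e*m + m*m*e"
    unfolding abs_mult by (intro add_mono mult_mono mult_nonneg_nonneg abs_ge_zero assms m e)
  also have "\<dots> = 3 * m^2 * e" by (simp add: power2_eq_square)
  finally show ?thesis .
qed

lemma abs_det_diff_le:
  fixes A B :: "real^3^3"
  assumes "\<And>i j. \<bar>A$i$j\<bar> \<le> m" "\<And>i j. \<bar>B$i$j\<bar> \<le> m" "\<And>i j. \<bar>A$i$j - B$i$j\<bar> \<le> e"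
  shows "\<bar>det A - det B\<bar> \<le> 18 * m^2 * e"
proof -
  have t: "\<bar>A$i1$j1*A$i2$j2*A$i3$j3 - B$i1$j1*B$i2$j2*B$i3$j3\<bar> \<le> 3 * m^2 * e"
    for i1 j1 i2 j2 i3 j3
    by (rule abs_prod3_diff_le) (simp_all add: assms)
  show ?thesis
    unfolding det_3 using t[of 1 1 2 2 3 3] t[of 1 2 2 3 3 1] t[of 1 3 2 1 3 2]
      t[of 1 1 2 3 3 2] t[of 1 2 2 1 3 3] t[of 1 3 2 2 3 1]
    unfolding abs_le_iff by linarith
qed

lemma det_scaleR_3: "det (c *\<^sub>R (X::real^3^3)) = c^3 * det X"
  unfolding det_3 by (simp add: algebra_simps power3_eq_cube)

lemma abs_1_minus_inverse_root3_le:
  assumes "1/2 \<le> s"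
  shows "\<bar>1 - 1 / root 3 s\<bar> \<le> 2 * \<bar>s - 1\<bar>"
proof -
  define t where "t = root 3 s"
  have t3: "t^3 = s" and t0: "0 < t" unfolding t_def using assms by simp_all
  have "(1/2)^3 < t^3" using assms t3 by (simp add: power3_eq_cube)
  then have t2: "1/2 < t" using t0 power_less_imp_less_base by fastforce
  have "s - 1 = (t - 1) * (t^2 + t + 1)"
    unfolding t3[symmetric] by (simp add: power2_eq_square power3_eq_cube algebra_simps)
  then have "\<bar>s - 1\<bar> = \<bar>t - 1\<bar> * (t^2 + t + 1)"
    using t0 by (simp add: abs_mult add_pos_nonneg)
  then have "\<bar>t - 1\<bar> \<le> \<bar>s - 1\<bar>"
    using t0 by (simp add: mult_le_cancel_left1 add_pos_nonneg)
  have "\<bar>1 - 1/t\<bar> = \<bar>t - 1\<bar> / t" using t0 by (simp add: field_simps abs_minus_commute)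
  also have "\<dots> \<le> 2 * \<bar>t - 1\<bar>"
    using t0 t2 mult_right_mono[of 1 "2 * t" "\<bar>t - 1\<bar>"] by (simp add: divide_le_eq algebra_simps)
  also have "\<dots> \<le> 2 * \<bar>s - 1\<bar>" using \<open>\<bar>t - 1\<bar> \<le> \<bar>s - 1\<bar>\<close> by simp
  finally show ?thesis unfolding t_def .
qed

text \<open>Replacing the scalar \<open>\<mu>\<close> by the determinant normalisation of the Diophantine condition
  costs only a constant factor, because \<open>det\<close> is Lipschitz near \<open>A\<close> and \<open>qdet A = 1\<close>.\<close>
lemma qnorm_diff_det_normalised_le:
  fixes A A' :: "real^3^3"
  defines "m \<equiv> qnorm A + 1"
  assumes qA: "qdet A = 1" and close: "qnorm (A - \<mu> *\<^sub>R A') \<le> \<delta>"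
    and small: "\<delta> \<le> 1" "36 * m^2 * \<delta> \<le> 1"
  shows "qnorm (A - inverse (root 3 (qdet A')) *\<^sub>R A') \<le> (1 + 36 * m^3) * \<delta>"
proof -
  define B where "B = \<mu> *\<^sub>R A'"
  have \<delta>: "0 \<le> \<delta>" using close qnorm_nonneg order_trans by blast
  have qB: "qnorm B \<le> m"
    using qnorm_diff_le[of A "A - B"] close small(1) unfolding B_def m_def by simp
  have "\<bar>det A - det B\<bar> \<le> 18 * m^2 * \<delta>"
  proof (rule abs_det_diff_le)
    show "\<bar>A$i$j\<bar> \<le> m" "\<bar>B$i$j\<bar> \<le> m" "\<bar>A$i$j - B$i$j\<bar> \<le> \<delta>" for i j
      using abs_entry_le_qnorm[of A i j] abs_entry_le_qnorm[of B i j] qB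
        abs_entry_le_qnorm[of "A - B" i j] close unfolding m_def B_def by auto
  qed
  then have s: "\<bar>qdet B - 1\<bar> \<le> 18 * m^2 * \<delta>" using qA unfolding qdet_def by linarith
  then have half: "1/2 \<le> qdet B" using small(2) by linarith
  then have "\<mu> \<noteq> 0" unfolding B_def qdet_def det_scaleR_3 by auto
  have ratio: "\<bar>1 - 1 / root 3 (qdet B)\<bar> \<le> 36 * m^2 * \<delta>"
    by (rule order_trans[OF abs_1_minus_inverse_root3_le[OF half]]) (use s in \<open>simp add: mult.commute mult.left_commute\<close>)
  have "qdet B = \<mu>^3 * qdet A'"
    unfolding B_def qdet_def det_scaleR_3 by simp
  then have "root 3 (qdet B) = \<mu> * root 3 (qdet A')"
    by (simp add: real_root_mult odd_real_root_power_cancel)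
  then have "inverse (root 3 (qdet A')) *\<^sub>R A' = (1 / root 3 (qdet B)) *\<^sub>R B"
    unfolding B_def using \<open>\<mu> \<noteq> 0\<close> by (simp add: field_simps)
  then have "A - inverse (root 3 (qdet A')) *\<^sub>R A' = (A - B) + (1 - 1 / root 3 (qdet B)) *\<^sub>R B"
    by (simp add: algebra_simps)
  also have "qnorm \<dots> \<le> qnorm (A - B) + \<bar>1 - 1 / root 3 (qdet B)\<bar> * qnorm B"
    by (rule order_trans[OF qnorm_triangle add_left_mono[OF qnorm_scaleR_le]])
  also have "\<dots> \<le> \<delta> + (36 * m^2 * \<delta>) * m"
    using close \<delta> unfolding B_def[symmetric]
    by (intro add_mono mult_mono[OF ratio qB]) (simp_all add: qnorm_nonneg)
  also have "\<dots> = (1 + 36 * m^3) * \<delta>" by (simp add: power2_eq_square power3_eq_cube algebra_simps)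
  finally show ?thesis .
qed

lemma diophantine_type_rescaled:
  assumes "diophantine_type A M" "qdet A = 1"
  obtains c \<delta>\<^sub>0 where "c > 0" "\<delta>\<^sub>0 > 0"
    "\<And>A' \<mu>. integral_form A' \<Longrightarrow> A' \<noteq> 0 \<Longrightarrow> qnorm (A - \<mu> *\<^sub>R A') \<le> \<delta>\<^sub>0 \<Longrightarrow>
       c * qnorm A' powr (- M) < qnorm (A - \<mu> *\<^sub>R A')"
proof -
  obtain c where c: "c > 0" and dio: "\<And>A'. integral_form A' \<Longrightarrow> A' \<noteq> 0 \<Longrightarrow>
      c * qnorm A' powr (- M) < qnorm (A - inverse (root 3 (qdet A')) *\<^sub>R A')"
    using assms(1) unfolding diophantine_type_def by blast
  define m where "m = qnorm A + 1"
  define K where "K = 1 + 36 * m^3"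
  have m: "1 \<le> m" unfolding m_def using qnorm_nonneg[of A] by simp
  then have K: "K > 0" unfolding K_def by (simp add: add_pos_nonneg)
  show ?thesis
  proof
    show "c / K > 0" "min 1 (1 / (36 * m^2)) > 0" using c K m by auto
  next
    fix A' \<mu> assume A': "integral_form A'" "A' \<noteq> 0"
      and close: "qnorm (A - \<mu> *\<^sub>R A') \<le> min 1 (1 / (36 * m^2))"
    have "36 * m^2 * qnorm (A - \<mu> *\<^sub>R A') \<le> 1"
      using close m by (simp add: field_simps)
    then have "qnorm (A - inverse (root 3 (qdet A')) *\<^sub>R A') \<le> K * qnorm (A - \<mu> *\<^sub>R A')"
      using qnorm_diff_det_normalised_le[OF assms(2) order_refl] close
      unfolding K_def m_def by simp
    then show "c / K * qnorm A' powr (- M) < qnorm (A - \<mu> *\<^sub>R A')"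
      using dio[OF A'] K by (simp add: field_simps)
  qed
qed

definition five_in_general_position :: "(real^3) set \<Rightarrow> bool" where
  "five_in_general_position Z \<longleftrightarrow>
     (\<exists>p1\<in>Z. \<exists>p2\<in>Z. \<exists>p3\<in>Z. \<exists>p4\<in>Z. \<exists>p5\<in>Z. general_position5 p1 p2 p3 p4 p5)"

lemma five_in_general_position_mono:
  "Z \<subseteq> Z' \<Longrightarrow> five_in_general_position Z \<Longrightarrow> five_in_general_position Z'"
  unfolding five_in_general_position_def by (meson subsetD)

definition covered_by_planes :: "nat \<Rightarrow> (real^3) set \<Rightarrow> bool" where
  "covered_by_planes k S \<longleftrightarrow>
     (\<exists>P. finite P \<and> card P \<le> k \<and> (\<forall>n\<in>P. n \<noteq> 0) \<and> S \<subseteq> (\<Union>n\<in>P. plane n))"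

lemma covered_by_planesI:
  assumes "length ns \<le> k" "0 \<notin> set ns" "\<And>p. p \<in> S \<Longrightarrow> \<exists>n\<in>set ns. n \<bullet> p = 0"
  shows "covered_by_planes k S"
  unfolding covered_by_planes_def plane_def
  using assms card_length[of ns] by (intro exI[of _ "set ns"]) fastforce

lemma covered_by_planes_linear_preimage:
  fixes h :: "real^3^3"
  assumes "invertible h" "covered_by_planes k ((\<lambda>v. h *v v) ` S)"
  shows "covered_by_planes k S"
proof -
  obtain P where P: "finite P" "card P \<le> k" "\<forall>n\<in>P. n \<noteq> 0"
    "(\<lambda>v. h *v v) ` S \<subseteq> (\<Union>n\<in>P. plane n)"
    using assms(2) unfolding covered_by_planes_def by blast
  obtain h' where h': "h ** h' = mat 1" using assms(1) unfolding invertible_def by blast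
  have "n v* h \<noteq> 0" if "n \<in> P" for n
  proof
    assume "n v* h = 0"
    then have "n = 0" by (metis h' vector_matrix_mul_assoc vector_matrix_mul_rid vector_matrix_mult_0)
    then show False using P(3) that by blast
  qed
  moreover have "S \<subseteq> (\<Union>n\<in>(\<lambda>n. n v* h) ` P. plane n)"
    using P(4) by (auto simp: plane_def dot_lmul_matrix)
  ultimately show ?thesis
    unfolding covered_by_planes_def using P(1,2) card_image_le[OF P(1), of "\<lambda>n. n v* h"]
    by (intro exI[of _ "(\<lambda>n. n v* h) ` P"]) auto
qed

lemma cross3_neq_0_if_triple_prod_neq_0: "triple_prod a b c \<noteq> 0 \<Longrightarrow> a \<times> b \<noteq> 0"
  unfolding triple_prod_def by auto

lemma covered_by_six_planes_through_four_points:
  assumes no5: "\<not> five_in_general_position Z"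
    and t: "t1 \<in> Z" "t2 \<in> Z" "t3 \<in> Z" "t4 \<in> Z"
    and gp: "triple_prod t1 t2 t3 \<noteq> 0" "triple_prod t1 t2 t4 \<noteq> 0"
      "triple_prod t1 t3 t4 \<noteq> 0" "triple_prod t2 t3 t4 \<noteq> 0"
  shows "covered_by_planes 6 Z"
proof (rule covered_by_planesI[of "[t1 \<times> t2, t1 \<times> t3, t1 \<times> t4, t2 \<times> t3, t2 \<times> t4, t3 \<times> t4]"])
  show "0 \<notin> set [t1 \<times> t2, t1 \<times> t3, t1 \<times> t4, t2 \<times> t3, t2 \<times> t4, t3 \<times> t4]"
    using gp triple_prod_swap_right[of t1 t2 t3] triple_prod_swap_right[of t1 t2 t4]
      triple_prod_swap_right[of t2 t3 t4] triple_prod_cyclic[of t1 t3 t4]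
      cross3_neq_0_if_triple_prod_neq_0[of t1 t2 t3] cross3_neq_0_if_triple_prod_neq_0[of t1 t3 t2]
      cross3_neq_0_if_triple_prod_neq_0[of t1 t4 t2] cross3_neq_0_if_triple_prod_neq_0[of t2 t3 t4]
      cross3_neq_0_if_triple_prod_neq_0[of t2 t4 t3] cross3_neq_0_if_triple_prod_neq_0[of t3 t4 t1]
    by auto
next
  fix p assume "p \<in> Z"
  then have "\<not> general_position5 t1 t2 t3 t4 p"
    using no5 t unfolding five_in_general_position_def by blast
  then show "\<exists>n\<in>set [t1 \<times> t2, t1 \<times> t3, t1 \<times> t4, t2 \<times> t3, t2 \<times> t4, t3 \<times> t4]. n \<bullet> p = 0"
    using gp unfolding general_position5_def triple_prod_def by auto
qed simp

text \<open>Greedily pick \<open>t1, t2, t3, t4 \<in> Z\<close>, each outside the planes spanned by pairs of the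
  previous ones. If the choice stops early, one to three planes suffice; otherwise every
  \<open>p \<in> Z\<close> lies in a plane through two of the \<open>ti\<close>, as \<open>t1, t2, t3, t4, p\<close> are not in
  general position.\<close>
lemma covered_by_six_planes:
  assumes nz: "0 \<notin> Z" and no5: "\<not> five_in_general_position Z"
  shows "covered_by_planes 6 Z"
proof (cases "Z = {}")
  case True
  then show ?thesis by (intro covered_by_planesI[of "[]"]) auto
next
  case False
  then obtain t1 where t1: "t1 \<in> Z" by auto
  show ?thesis
  proof (cases "\<forall>p\<in>Z. t1 \<times> p = 0")
    case True
    obtain e where e: "t1 \<times> e \<noteq> 0"
      using cross_basis_nonzero[of t1] nz t1 by auto
    have "(t1 \<times> e) \<bullet> p = 0" if "p \<in> Z" for p
      using True that triple_prod_swap_right[of t1 p e] unfolding triple_prod_def by simp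
    then show ?thesis using e by (intro covered_by_planesI[of "[t1 \<times> e]"]) auto
  next
    case False
    then obtain t2 where t2: "t2 \<in> Z" "t1 \<times> t2 \<noteq> 0" by auto
    show ?thesis
    proof (cases "\<forall>p\<in>Z. triple_prod t1 t2 p = 0")
      case True
      then show ?thesis using t2
        by (intro covered_by_planesI[of "[t1 \<times> t2]"]) (auto simp: triple_prod_def)
    next
      case False
      then obtain t3 where t3: "t3 \<in> Z" "triple_prod t1 t2 t3 \<noteq> 0" by auto
      show ?thesis
      proof (cases "\<forall>p\<in>Z. triple_prod t1 t2 p = 0 \<or> triple_prod t1 t3 p = 0 \<or> triple_prod t2 t3 p = 0")
        case True
        have "t1 \<times> t3 \<noteq> 0" "t2 \<times> t3 \<noteq> 0"
          using t3(2) triple_prod_swap_right[of t1 t2 t3] triple_prod_cyclic[of t1 t2 t3]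
            cross3_neq_0_if_triple_prod_neq_0[of t1 t3 t2] cross3_neq_0_if_triple_prod_neq_0[of t2 t3 t1]
          by auto
        with True t2(2) show ?thesis
          by (intro covered_by_planesI[of "[t1 \<times> t2, t1 \<times> t3, t2 \<times> t3]"]) (auto simp: triple_prod_def)
      next
        case False
        then obtain t4 where "t4 \<in> Z" "triple_prod t1 t2 t4 \<noteq> 0"
          "triple_prod t1 t3 t4 \<noteq> 0" "triple_prod t2 t3 t4 \<noteq> 0" by auto
        with no5 t1 t2(1) t3 show ?thesis by (intro covered_by_six_planes_through_four_points)
      qed
    qed
  qed
qed

lemma approximation_error_le:
  fixes R M C \<eta> \<kappa> :: real
  assumes "R > 1" "M > 1" "10 * C^4 * \<eta> \<le> \<kappa>" "0 \<le> \<kappa>"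
  shows "10 * (\<eta> * R powr (- 50 * M)) * (C * R^2)^4 \<le> \<kappa> * R powr (- 20 * M)"
proof -
  have "R powr (8 - 50 * M) = R^8 * R powr (- 50 * M)"
    using assms(1) powr_add[of R 8 "- 50 * M"] powr_realpow[of R 8] by simp
  then have "10 * (\<eta> * R powr (- 50 * M)) * (C * R^2)^4 = 10 * C^4 * \<eta> * R powr (8 - 50 * M)"
    by (simp add: power_mult_distrib power_mult[symmetric] algebra_simps)
  also have "\<dots> \<le> \<kappa> * R powr (8 - 50 * M)"
    using assms(3) by (intro mult_right_mono) simp_all
  also have "\<dots> \<le> \<kappa> * R powr (- 20 * M)"
    using assms by (intro mult_left_mono powr_mono) auto
  finally show ?thesis .
qed

lemma height_powr_eq:
  fixes R M C :: real
  assumes "R > 0" "C > 0"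
  shows "(4 * (C * R^2)^10) powr (- M) = (4 * C^10) powr (- M) * R powr (- 20 * M)"
proof -
  have "(R^20) powr (- M) = R powr (- 20 * M)"
    using assms(1) powr_realpow[of R 20] powr_powr[of R 20 "- M"] by simp
  moreover have "4 * (C * R^2)^10 = 4 * C^10 * R^20"
    by (simp add: power_mult_distrib power_mult[symmetric])
  ultimately show ?thesis using assms by (simp add: powr_mult)
qed

lemma no_five_small_values_in_general_position:
  assumes M: "M > 1" and sym: "symmetric_form A" and qdet: "qdet A = 1"
    and dio: "diophantine_type A M" and C: "C > 0"
  obtains \<eta> where "0 < \<eta>" "\<eta> < 1"
    "\<And>R. R > 1 \<Longrightarrow> \<not> five_in_general_position
       {z. int_vec z \<and> norm z \<le> C * R^2 \<and> \<bar>qf A z\<bar> \<le> \<eta> * R powr (- 50 * M)}"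
proof -
  obtain c \<delta>\<^sub>0 where c: "c > 0" and \<delta>\<^sub>0: "\<delta>\<^sub>0 > 0" and approx: "\<And>A' \<mu>. integral_form A' \<Longrightarrow> A' \<noteq> 0 \<Longrightarrow>
      qnorm (A - \<mu> *\<^sub>R A') \<le> \<delta>\<^sub>0 \<Longrightarrow> c * qnorm A' powr (- M) < qnorm (A - \<mu> *\<^sub>R A')"
    using diophantine_type_rescaled[OF dio qdet] by blast
  define \<kappa> where "\<kappa> = min \<delta>\<^sub>0 (c * (4 * C^10) powr (- M))"
  define \<eta> where "\<eta> = min (1/2) (\<kappa> / (10 * C^4))"
  have \<kappa>: "\<kappa> > 0" "\<kappa> \<le> \<delta>\<^sub>0" "\<kappa> \<le> c * (4 * C^10) powr (- M)"
    unfolding \<kappa>_def using c \<delta>\<^sub>0 C by simp_all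
  have "\<eta> \<le> \<kappa> / (10 * C^4)" unfolding \<eta>_def by simp
  then have \<eta>\<kappa>: "10 * C^4 * \<eta> \<le> \<kappa>" using C by (simp add: field_simps)
  show ?thesis
  proof
    show "0 < \<eta>" "\<eta> < 1" unfolding \<eta>_def using \<kappa> C by simp_all
  next
    fix R :: real assume R: "R > 1"
    define N where "N = C * R^2"
    define e where "e = \<eta> * R powr (- 50 * M)"
    show "\<not> five_in_general_position {z. int_vec z \<and> norm z \<le> N \<and> \<bar>qf A z\<bar> \<le> e}"
    proof
      assume "five_in_general_position {z. int_vec z \<and> norm z \<le> N \<and> \<bar>qf A z\<bar> \<le> e}"
      then obtain p1 p2 p3 p4 p5 where gp: "general_position5 p1 p2 p3 p4 p5"
        and pts: "\<And>p. p \<in> {p1, p2, p3, p4, p5} \<Longrightarrow> int_vec p \<and> norm p \<le> N \<and> \<bar>qf A p\<bar> \<le> e"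
        unfolding five_in_general_position_def by blast
      obtain A' \<mu> where A': "integral_form A'" "A' \<noteq> 0" "qnorm A' \<le> 4 * N^10"
        and close: "qnorm (A - \<mu> *\<^sub>R A') \<le> 10 * e * N^4"
        using integral_form_approximation[OF sym gp pts] by blast
      have small: "10 * e * N^4 \<le> \<kappa> * R powr (- 20 * M)"
        unfolding e_def N_def using R M \<eta>\<kappa> \<kappa>(1) by (intro approximation_error_le) auto
      have R20: "R powr (- 20 * M) \<le> 1" using R M powr_mono[of "- 20 * M" 0 R] by simp
      have "c * (4 * C^10) powr (- M) * R powr (- 20 * M) = c * (4 * N^10) powr (- M)"
        unfolding N_def using R C by (simp add: height_powr_eq)
      also have "\<dots> \<le> c * qnorm A' powr (- M)"
        using A'(3) qnorm_pos[OF A'(2)] c M by (intro mult_left_mono powr_mono2') auto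
      also have "\<dots> < qnorm (A - \<mu> *\<^sub>R A')"
      proof (rule approx[OF A'(1,2)])
        show "qnorm (A - \<mu> *\<^sub>R A') \<le> \<delta>\<^sub>0"
          using close small mult_left_le[OF R20, of \<kappa>] \<kappa> by linarith
      qed
      also have "\<dots> \<le> c * (4 * C^10) powr (- M) * R powr (- 20 * M)"
        using close small mult_right_mono[OF \<kappa>(3) powr_ge_zero[of R "- 20 * M"]] by linarith
      finally show False by simp
    qed
  qed
qed

lemma small_lattice_points_pullback:
  assumes gi: "gi ** g = mat 1" and Q: "\<And>v. qf A v = Q0 (g *v v)"
    and K: "\<And>x. norm (gi *v x) \<le> norm x * K" "0 \<le> K" and "0 \<le> \<eta>" "0 \<le> M" "0 < R"
  shows "(\<lambda>v. gi *v v) ` {v \<in> lattice_of g \<inter> Hset \<eta> M. R \<le> infnorm v \<and> infnorm v < R^2}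
    \<subseteq> {z. z \<noteq> 0 \<and> int_vec z \<and> norm z \<le> K * sqrt 3 * R^2 \<and> \<bar>qf A z\<bar> \<le> \<eta> * R powr (- 50 * M)}"
proof (intro image_subsetI CollectI conjI)
  fix v assume "v \<in> {v \<in> lattice_of g \<inter> Hset \<eta> M. R \<le> infnorm v \<and> infnorm v < R^2}"
  then have v: "v \<in> lattice_of g" "v \<in> Hset \<eta> M" "R \<le> infnorm v" "infnorm v < R^2" by auto
  obtain z :: "int^3" where "v = g *v (\<chi> i. of_int (z$i))"
    using v(1) unfolding lattice_of_def by auto
  then have gv: "g *v (gi *v v) = v" and "gi *v v = (\<chi> i. of_int (z$i))"
    by (simp_all add: matrix_vector_mul_assoc gi)
  then show "int_vec (gi *v v)" unfolding int_vec_def by simp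
  show "gi *v v \<noteq> 0" using gv v(3) \<open>0 < R\<close> by (auto simp: infnorm_0)
  have "norm (gi *v v) \<le> (sqrt 3 * infnorm v) * K"
    using K(1)[of v] norm_le_infnorm[of v] K(2) by (simp add: order_trans mult_right_mono)
  also have "\<dots> \<le> (sqrt 3 * R^2) * K"
    using v(4) K(2) by (intro mult_right_mono) auto
  finally show "norm (gi *v v) \<le> K * sqrt 3 * R^2" by (simp add: algebra_simps)
  have "\<bar>Q0 v\<bar> \<le> \<eta> * infnorm v powr (- 50 * M)" using v(2) unfolding Hset_def by auto
  also have "\<dots> \<le> \<eta> * R powr (- 50 * M)"
    using v(3) assms(5-7) by (intro mult_left_mono powr_mono2') auto
  finally show "\<bar>qf A (gi *v v)\<bar> \<le> \<eta> * R powr (- 50 * M)" using Q gv by simp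
qed

theorem lemma2p4:
  fixes M :: real and A g :: "real^3^3"
  assumes "M > 1"
    and "symmetric_form A"
    and "\<exists>u w. qf A u > 0 \<and> qf A w < 0"
    and "qdet A = 1"
    and "diophantine_type A M"
    and "det g = 1"
    and "\<forall>v. qf A v = Q0 (g *v v)"
  shows "\<exists>\<eta>. 0 < \<eta> \<and> \<eta> < 1 \<and>
     (\<forall>R > 10. \<exists>P. finite P \<and> card P \<le> 6 \<and> (\<forall>n\<in>P. n \<noteq> 0) \<and>
        {v \<in> lattice_of g \<inter> Hset \<eta> M. R \<le> infnorm v \<and> infnorm v < R^2}
          \<subseteq> (\<Union>n\<in>P. plane n))"
proof -
  obtain gi where gi: "gi ** g = mat 1" "g ** gi = mat 1"
    using assms(6) invertible_det_nz[of g] unfolding invertible_def by auto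
  obtain K where K: "K > 0" "\<And>x. norm (gi *v x) \<le> norm x * K"
    using bounded_linear.pos_bounded[OF matrix_vector_mul_bounded_linear[of gi]] by blast
  obtain \<eta> where \<eta>: "0 < \<eta>" "\<eta> < 1" and no5: "\<And>R. R > 1 \<Longrightarrow> \<not> five_in_general_position
      {z. int_vec z \<and> norm z \<le> K * sqrt 3 * R^2 \<and> \<bar>qf A z\<bar> \<le> \<eta> * R powr (- 50 * M)}"
    using no_five_small_values_in_general_position[OF assms(1,2,4,5), of "K * sqrt 3"] K(1) by auto
  have "covered_by_planes 6 {v \<in> lattice_of g \<inter> Hset \<eta> M. R \<le> infnorm v \<and> infnorm v < R^2}"
    if R: "R > 10" for R
  proof (rule covered_by_planes_linear_preimage)
    show "invertible gi" using gi unfolding invertible_def by blast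
    let ?Z = "(\<lambda>v. gi *v v) ` {v \<in> lattice_of g \<inter> Hset \<eta> M. R \<le> infnorm v \<and> infnorm v < R^2}"
    have Z: "?Z \<subseteq> {z. z \<noteq> 0 \<and> int_vec z \<and> norm z \<le> K * sqrt 3 * R^2 \<and>
        \<bar>qf A z\<bar> \<le> \<eta> * R powr (- 50 * M)}"
      using assms(1,7) K \<eta>(1) R by (intro small_lattice_points_pullback[OF gi(1)]) auto
    then have "?Z \<subseteq> {z. int_vec z \<and> norm z \<le> K * sqrt 3 * R^2 \<and> \<bar>qf A z\<bar> \<le> \<eta> * R powr (- 50 * M)}"
      by blast
    then have "\<not> five_in_general_position ?Z"
      using no5[of R] R five_in_general_position_mono by fastforce
    moreover have "0 \<notin> ?Z" using Z by blast
    ultimately show "covered_by_planes 6 ?Z" by (intro covered_by_six_planes)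
  qed
  then show ?thesis using \<eta> unfolding covered_by_planes_def by blast
qed

end
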